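(* $z_2(4,4)\ge 10$.
   Context: Double Zarankiewicz number: consider configurations $G=([m],[n],E_1\cup E_2)$ where $[m]=\{1,\dots,m\}$, $E_1\subseteq[m]\times[n]$ is a set of 1-edges (cells) and $E_2$ is a set of 2-edges $(i,j;k,l)$ with $i,k\in[m]$, $j,l\in[n]$, $i\ne k$, $j\ne l$; the cells $(i,j)$ and $(k,l)$ are the two halves of this 2-edge. Simplicity condition: the halves of all 2-edges are pairwise distinct cells and none of them belongs to $E_1$. A cell is occupied if it lies in $E_1$ or is a half of some 2-edge. $G$ contains a generalized $C_4$-cycle if (1) there are four 1-edges $(i,j),(i,l),(k,j),(k,l)\in E_1$ with $i\ne k$, $j\ne l$; or (2) there is a 2-edge $(i,j;k,l)\in E_2$ whose two opposite cells $(i,l)$ and $(k,j)$ are both occupied; or (3) there are a 2-edge $(i,j;p,q)\in E_2$ and a cell $(k,l)$ such that the five cells $(k,l),(k,j),(k,q),(i,l),(p,l)$ are pairwise distinct and all occupied. $z_2(m,n)$ is the maximum of $|E_1|+|E_2|$ over all such $G$ satisfying the simplicity condition and containing no generalized $C_4$-cycle. *)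

theory Defs
  imports Main
begin

type_synonym cell = "nat \<times> nat"
type_synonym edge2 = "cell \<times> cell"  (* ((i,j),(k,l)) is the 2-edge (i,j;k,l) *)

definition cells :: "nat \<Rightarrow> nat \<Rightarrow> cell set" where
  "cells m n = {1..m} \<times> {1..n}"

definition halves :: "edge2 \<Rightarrow> cell set" where
  "halves e = {fst e, snd e}"

definition simple_config :: "nat \<Rightarrow> nat \<Rightarrow> cell set \<Rightarrow> edge2 set \<Rightarrow> bool" where
  "simple_config m n E1 E2 \<longleftrightarrow>
     E1 \<subseteq> cells m n \<and>
     (\<forall>((i,j),(k,l)) \<in> E2. (i,j) \<in> cells m n \<and> (k,l) \<in> cells m n \<and> i \<noteq> k \<and> j \<noteq> l) \<and>
     (\<forall>e\<in>E2. \<forall>e'\<in>E2. e \<noteq> e' \<longrightarrow> halves e \<inter> halves e' = {}) \<and>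
     (\<forall>e\<in>E2. halves e \<inter> E1 = {})"

definition occupied :: "cell set \<Rightarrow> edge2 set \<Rightarrow> cell \<Rightarrow> bool" where
  "occupied E1 E2 c \<longleftrightarrow> c \<in> E1 \<or> (\<exists>e\<in>E2. c \<in> halves e)"

definition has_gen_C4 :: "cell set \<Rightarrow> edge2 set \<Rightarrow> bool" where
  "has_gen_C4 E1 E2 \<longleftrightarrow>
     (\<exists>i j k l. i \<noteq> k \<and> j \<noteq> l \<and> (i,j) \<in> E1 \<and> (i,l) \<in> E1 \<and> (k,j) \<in> E1 \<and> (k,l) \<in> E1) \<or>
     (\<exists>i j k l. ((i,j),(k,l)) \<in> E2 \<and> occupied E1 E2 (i,l) \<and> occupied E1 E2 (k,j)) \<or>
     (\<exists>i j p q k l. ((i,j),(p,q)) \<in> E2 \<and>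
        distinct [(k,l),(k,j),(k,q),(i,l),(p,l)] \<and>
        (\<forall>c \<in> {(k,l),(k,j),(k,q),(i,l),(p,l)}. occupied E1 E2 c))"

definition z2 :: "nat \<Rightarrow> nat \<Rightarrow> nat" where
  "z2 m n = Max {card E1 + card E2 | E1 E2.
                   simple_config m n E1 E2 \<and> \<not> has_gen_C4 E1 E2}"

end

theory Submission
  imports Defs
begin

definition occupied_cells :: "cell set \<Rightarrow> edge2 set \<Rightarrow> cell set" where
  "occupied_cells E1 E2 = E1 \<union> \<Union> (halves ` E2)"

lemma occupied_iff_mem_occupied_cells: "occupied E1 E2 c \<longleftrightarrow> c \<in> occupied_cells E1 E2"
  by (auto simp: occupied_def occupied_cells_def)

(* All quantifiers range over the finite data of the configuration, so that the simplifier
   decides the condition for an explicitly given configuration. *)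
lemma has_gen_C4_iff_bounded:
  "has_gen_C4 E1 E2 \<longleftrightarrow>
     (\<exists>(i,j)\<in>E1. \<exists>(k,l)\<in>E1. i \<noteq> k \<and> j \<noteq> l \<and> (i,l) \<in> E1 \<and> (k,j) \<in> E1) \<or>
     (\<exists>((i,j),(k,l))\<in>E2. (i,l) \<in> occupied_cells E1 E2 \<and> (k,j) \<in> occupied_cells E1 E2) \<or>
     (\<exists>((i,j),(p,q))\<in>E2. \<exists>(k,l)\<in>occupied_cells E1 E2.
        distinct [(k,l),(k,j),(k,q),(i,l),(p,l)] \<and>
        {(k,j),(k,q),(i,l),(p,l)} \<subseteq> occupied_cells E1 E2)"
  unfolding has_gen_C4_def occupied_iff_mem_occupied_cells
  by (intro arg_cong2[where f = "(\<or>)"]) fast+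

lemma finite_config_sizes:
  "finite {card E1 + card E2 | E1 E2. simple_config m n E1 E2 \<and> \<not> has_gen_C4 E1 E2}"
proof -
  let ?C = "cells m n"
  have "{card E1 + card E2 | E1 E2. simple_config m n E1 E2 \<and> \<not> has_gen_C4 E1 E2}
          \<subseteq> (\<lambda>(E1, E2). card E1 + card E2) ` (Pow ?C \<times> Pow (?C \<times> ?C))"
    by (auto simp: simple_config_def image_iff)
  moreover have "finite (Pow ?C \<times> Pow (?C \<times> ?C))"
    by (simp add: cells_def)
  ultimately show ?thesis
    by (meson finite_imageI finite_subset)
qed

lemma config_size_le_z2:
  assumes "simple_config m n E1 E2" and "\<not> has_gen_C4 E1 E2"
  shows "card E1 + card E2 \<le> z2 m n"
  unfolding z2_def using assms by (intro Max_ge[OF finite_config_sizes]) blast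

(* The witness: 1-edges are marked 1, the halves of the two 2-edges a and b
   (row i, column j).
     1 a 1 .
     a . b 1
     1 1 . 1
     . b 1 1 *)
definition cells44 :: "cell set" where
  "cells44 = {(1,1), (1,3), (2,4), (3,1), (3,2), (3,4), (4,3), (4,4)}"

definition edges44 :: "edge2 set" where
  "edges44 = {((2,1), (1,2)), ((4,2), (2,3))}"

lemma occupied_cells44:
  "occupied_cells cells44 edges44 =
     {(1,1), (1,2), (1,3), (2,1), (2,3), (2,4), (3,1), (3,2), (3,4), (4,2), (4,3), (4,4)}"
  by (auto simp: occupied_cells_def cells44_def edges44_def halves_def)

lemma not_has_gen_C4_44: "\<not> has_gen_C4 cells44 edges44"
  unfolding has_gen_C4_iff_bounded occupied_cells44
  by (simp add: cells44_def edges44_def)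

lemma simple_config44: "simple_config 4 4 cells44 edges44"
  by (auto simp: simple_config_def cells44_def edges44_def halves_def cells_def)

lemma card_config44: "card cells44 + card edges44 = 10"
  by (simp add: cells44_def edges44_def)

theorem theorem3p1:
  shows "z2 4 4 \<ge> 10"
  using config_size_le_z2[OF simple_config44 not_has_gen_C4_44] by (simp only: card_config44)

end
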